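(* Let $z$ be an indeterminate and for $n\ge0$ let $P_n(x)=\sum_{k=0}^{n}\frac{(q^{-n},q^{n+1};q)_k\,(q(1+(q-1)x);q)_k\,q^k}{(q,q,q(1+(q-1)z);q)_k}$. Then the polynomials $\left(\frac1z\int_0^z\beta_n(y)\,dy\right)_{n\ge0}$ are the moments of the orthogonal polynomials $(P_n)_{n\ge0}$.
   Context: $q$ is an indeterminate; we work over $\mathbb{Q}(q,z)$. $(a;q)_k=(1-a)(1-qa)\cdots(1-q^{k-1}a)$, $(a_1,\dots,a_r;q)_k=\prod_i(a_i;q)_k$. The $q$-Bernoulli–Carlitz numbers $\beta_n\in\mathbb{Q}(q)$ are defined by: for all $n\ge0$, $q\sum_{k=0}^{n}\binom{n}{k}q^k\beta_k-\beta_n$ equals $q-1$ if $n=0$, $1$ if $n=1$, and $0$ if $n>1$. Let $\Psi$ be the linear form with $\Psi(x^n)=\beta_n$, extended linearly over $\mathbb{Q}(q)[z]$. The $q$-Bernoulli–Carlitz polynomials are $\beta_n(z)=\Psi\big((z+(z(q-1)+1)x)^n\big)$. A sequence $(m_n)$ with $m_0=1$ is the sequence of moments of $(P_n)$ ($\deg P_n=n$) if the linear functional $L$ with $L(x^n)=m_n$ satisfies $L(P_mP_n)=0$ for $m\ne n$ and $L(P_n^2)\ne0$. *)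

theory Defs
  imports "HOL-Computational_Algebra.Polynomial" "HOL-Computational_Algebra.Fraction_Field"
begin

text \<open>Q(q) = fraction field of Q[q];  Q(q,z) = fraction field of Q(q)[z].\<close>
type_synonym qfield = "rat poly fract"
type_synonym qzfield = "qfield poly fract"

definition qQ :: qfield where "qQ = Fract [:0, 1:] 1"
definition qK :: qzfield where "qK = Fract [: qQ :] 1"
definition zK :: qzfield where "zK = Fract [:0, 1:] 1"

definition qpoch :: "'a::comm_ring_1 \<Rightarrow> 'a \<Rightarrow> nat \<Rightarrow> 'a" where
  "qpoch a q k = (\<Prod>j<k. 1 - q ^ j * a)"

text \<open>The linear form Psi (x^n maps to beta n), extended Q(q)[z]-linearly; the argument is a
  polynomial in x whose coefficients are polynomials in z.\<close>
definition Psi :: "(nat \<Rightarrow> qfield) \<Rightarrow> qfield poly poly \<Rightarrow> qfield poly" where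
  "Psi \<beta> p = (\<Sum>i\<le>degree p. smult (\<beta> i) (coeff p i))"

text \<open>q-Bernoulli-Carlitz polynomial beta_n(z) = Psi((z + (z(q-1)+1) x)^n).\<close>
definition qbc_poly :: "(nat \<Rightarrow> qfield) \<Rightarrow> nat \<Rightarrow> qfield poly" where
  "qbc_poly \<beta> n = Psi \<beta> ([: [:0, 1:], [:1, qQ - 1:] :] ^ n)"

definition poly_integral :: "'a::field_char_0 poly \<Rightarrow> 'a poly" where
  "poly_integral f = (\<Sum>i\<le>degree f. monom (coeff f i / of_nat (i + 1)) (i + 1))"

definition mom_functional :: "(nat \<Rightarrow> 'a::comm_ring_1) \<Rightarrow> 'a poly \<Rightarrow> 'a" where
  "mom_functional mom p = (\<Sum>i\<le>degree p. coeff p i * mom i)"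

definition moments_of :: "(nat \<Rightarrow> 'a::comm_ring_1) \<Rightarrow> (nat \<Rightarrow> 'a poly) \<Rightarrow> bool" where
  "moments_of mom P \<longleftrightarrow> mom 0 = 1 \<and> (\<forall>n. degree (P n) = n) \<and>
     (\<forall>m n. m \<noteq> n \<longrightarrow> mom_functional mom (P m * P n) = 0) \<and>
     (\<forall>n. mom_functional mom (P n ^ 2) \<noteq> 0)"

definition P_seq :: "nat \<Rightarrow> qzfield poly" where
  "P_seq n = (\<Sum>k\<le>n.
     smult ((qpoch (inverse (qK ^ n)) qK k * qpoch (qK ^ (n + 1)) qK k * qK ^ k) /
            (qpoch qK qK k * qpoch qK qK k * qpoch (qK * (1 + (qK - 1) * zK)) qK k))
       (qpoch (smult qK [:1, qK - 1:]) [:qK:] k))"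

end

theory Submission
  imports Defs
begin

text \<open>
  Substituting \<open>u = 1 + (q - 1) x\<close> turns \<open>P\<^sub>n\<close> into the big \<open>q\<close>-Legendre polynomial
  \<open>p\<^sub>n(u) = P\<^sub>n(qu; S; q)\<close> with \<open>S = 1 + (q - 1) z\<close>. These are orthogonal for the
  normalised Jackson integral over \<open>[1, S]\<close>, whose moments are
  \<open>\<nu>\<^sub>m = (S\<^sup>m\<^sup>+\<^sup>1 - 1) / (z (q\<^sup>m\<^sup>+\<^sup>1 - 1))\<close>: testing \<open>p\<^sub>n\<close> against the basis
  \<open>(qu/S; q)\<^sub>j\<close>, \<open>q\<close>-integration by parts evaluates every integral in closed form and the
  \<open>q\<close>-Chu--Vandermonde sum shows that it vanishes exactly for \<open>j < n\<close>.

  It remains to see that the given moments send \<open>u\<^sup>m\<close> to \<open>\<nu>\<^sub>m\<close>. The recurrence of the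
  Carlitz numbers says \<open>\<Psi>(q p(1 + qx) - p(x)) = (q - 1) p(0) + p'(0)\<close>; for \<open>p = u\<^sup>m\<close> this
  gives \<open>(q\<^sup>m\<^sup>+\<^sup>1 - 1) \<Psi>(u\<^sup>m) = (q - 1)(m + 1)\<close>. Since \<open>1 + (q - 1)(z + Sx) = S u\<close>, the
  binomial theorem gives \<open>\<Sum>\<^sub>n C(m,n) (q - 1)\<^sup>n \<beta>\<^sub>n(z) = \<Psi>(u\<^sup>m) S\<^sup>m\<close>, and integrating in
  \<open>z\<close> yields \<open>\<nu>\<^sub>m\<close>.
\<close>

section \<open>\<open>q\<close>-Pochhammer symbols and polynomials\<close>


lemma qpoch_0 [simp]: "qpoch a q 0 = 1"
  by (simp add: qpoch_def)

lemma qpoch_Suc: "qpoch a q (Suc k) = qpoch a q k * (1 - q ^ k * a)"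
  by (simp add: qpoch_def)

lemma qpoch_Suc_left: "qpoch a q (Suc k) = (1 - a) * qpoch (a * q) q k"
  unfolding qpoch_def prod.lessThan_Suc_shift by (simp add: mult_ac)

lemma qpoch_eq_0_iff: "qpoch (a::'a::idom) q k = 0 \<longleftrightarrow> (\<exists>j<k. q ^ j * a = 1)"
  unfolding qpoch_def by auto

lemma qpoch_power_nonzero:
  fixes q :: "'a::idom"
  assumes "\<And>m. m > 0 \<Longrightarrow> q ^ m \<noteq> 1" and "e > 0"
  shows "qpoch (q ^ e) q k \<noteq> 0"
  using assms by (auto simp: qpoch_eq_0_iff simp flip: power_add)

definition qpoch_poly :: "'a::comm_ring_1 \<Rightarrow> 'a \<Rightarrow> nat \<Rightarrow> 'a poly" where
  "qpoch_poly q c k = (\<Prod>j<k. [:1, - c * q ^ j:])"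

lemma qpoch_poly_0 [simp]: "qpoch_poly q c 0 = 1"
  by (simp add: qpoch_poly_def)

lemma qpoch_poly_Suc: "qpoch_poly q c (Suc k) = qpoch_poly q c k * [:1, - c * q ^ k:]"
  by (simp add: qpoch_poly_def)

lemma qpoch_poly_Suc_left: "qpoch_poly q c (Suc k) = [:1, - c:] * qpoch_poly q (c * q) k"
  unfolding qpoch_poly_def prod.lessThan_Suc_shift by (simp add: mult.assoc)

lemma poly_qpoch_poly: "poly (qpoch_poly q c k) x = qpoch (c * x) q k"
  unfolding qpoch_poly_def qpoch_def poly_prod by (intro prod.cong) (auto simp: algebra_simps)

lemma pcompose_qpoch_poly_dilate: "qpoch_poly q c k \<circ>\<^sub>p [:0, q:] = qpoch_poly q (c * q) k"
  unfolding qpoch_poly_def pcompose_prod by (intro prod.cong) (auto simp: pcompose_pCons algebra_simps)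

lemma degree_qpoch_poly:
  fixes q c :: "'a::idom"
  assumes "q \<noteq> 0" "c \<noteq> 0"
  shows "degree (qpoch_poly q c k) = k"
  using assms unfolding qpoch_poly_def by (simp add: degree_prod_eq_sum_degree)

lemma lead_coeff_qpoch_poly_nonzero:
  fixes q c :: "'a::idom"
  assumes "q \<noteq> 0" "c \<noteq> 0"
  shows "lead_coeff (qpoch_poly q c k) \<noteq> 0"
  using assms lead_coeff_prod[of "\<lambda>j. [:1, - c * q ^ j:]" "{..<k}"]
  by (simp add: qpoch_poly_def)

lemma qdiff_qpoch_poly_product:
  fixes a b q :: "'a::comm_ring_1" and j k :: nat
  defines "g \<equiv> qpoch_poly q a (Suc k) * qpoch_poly q b (Suc j)"
  shows "g - g \<circ>\<^sub>p [:0, q:] = [:0, 1:] * qpoch_poly q (a * q) k * qpoch_poly q (b * q) j *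
           [:a * (q ^ Suc k - 1) + b * (q ^ Suc j - 1), a * b * (1 - q ^ (k + j + 2)):]"
proof -
  define A where "A = qpoch_poly q (a * q) k"
  define B where "B = qpoch_poly q (b * q) j"
  have "g = A * B * ([:1, - a:] * [:1, - b:])"
    by (simp only: g_def A_def B_def qpoch_poly_Suc_left mult_ac)
  moreover have "g \<circ>\<^sub>p [:0, q:] = qpoch_poly q (a * q) (Suc k) * qpoch_poly q (b * q) (Suc j)"
    by (simp only: g_def pcompose_mult pcompose_qpoch_poly_dilate)
  then have "g \<circ>\<^sub>p [:0, q:] = A * B * ([:1, - a * q ^ Suc k:] * [:1, - b * q ^ Suc j:])"
    by (simp only: A_def B_def qpoch_poly_Suc power_Suc mult_minus_left mult_minus_right mult_ac)
  ultimately have "g - g \<circ>\<^sub>p [:0, q:] =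
      A * B * ([:1, - a:] * [:1, - b:] - [:1, - a * q ^ Suc k:] * [:1, - b * q ^ Suc j:])"
    by (simp only: right_diff_distrib)
  also have "[:1, - a:] * [:1, - b:] - [:1, - a * q ^ Suc k:] * [:1, - b * q ^ Suc j:] =
      [:0, 1:] * [:a * (q ^ Suc k - 1) + b * (q ^ Suc j - 1), a * b * (1 - q ^ (k + j + 2)):]"
    by (simp add: algebra_simps power_add)
  finally show ?thesis
    by (simp only: A_def B_def mult_ac)
qed

section \<open>Polynomials and moment functionals\<close>

lemma degree_linear_power_le: "degree ([:a, b:] ^ m) \<le> m"
  by (rule order.trans[OF degree_power_le]) (cases "b = 0"; simp)

lemma coeff_linear_power:
  fixes b :: "'a::comm_semiring_1"
  shows "coeff ([:1, b:] ^ m) i = of_nat (m choose i) * b ^ i"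
proof (cases "i \<le> m")
  case True
  then show ?thesis
    by (simp add: coeff_linear_poly_power)
next
  case False
  then show ?thesis
    using degree_linear_power_le[of 1 b m] by (simp add: coeff_eq_0 binomial_eq_0)
qed

lemma smult_sum_right: "smult a (\<Sum>i\<in>A. f i) = (\<Sum>i\<in>A. smult a (f i))"
  by (induction A rule: infinite_finite_induct) (simp_all add: smult_add_right)

lemma mom_functional_eq_sum_atMost:
  assumes "degree p \<le> N"
  shows "mom_functional m p = (\<Sum>i\<le>N. coeff p i * m i)"
  unfolding mom_functional_def
  by (rule sum.mono_neutral_left) (use assms in \<open>auto simp: coeff_eq_0\<close>)

lemma mom_functional_add: "mom_functional m (p + r) = mom_functional m p + mom_functional m r"
proof -
  let ?N = "max (degree p) (degree r)"
  have "degree (p + r) \<le> ?N"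
    by (rule degree_add_le) auto
  then show ?thesis
    by (simp add: mom_functional_eq_sum_atMost[of _ ?N] algebra_simps sum.distrib)
qed

lemma mom_functional_smult: "mom_functional m (smult a p) = a * mom_functional m p"
  by (simp add: mom_functional_eq_sum_atMost[of "smult a p" "degree p"]
      mom_functional_eq_sum_atMost[of p "degree p"] degree_smult_le sum_distrib_left mult_ac)

lemma mom_functional_0 [simp]: "mom_functional m 0 = 0"
  by (simp add: mom_functional_def)

lemma mom_functional_1: "mom_functional m 1 = m 0"
  by (simp add: mom_functional_def)

lemma mom_functional_diff: "mom_functional m (p - r) = mom_functional m p - mom_functional m r"
  using mom_functional_add[of m p "- r"] mom_functional_smult[of m "- 1" r] by simp

lemma mom_functional_sum: "mom_functional m (\<Sum>i\<in>A. f i) = (\<Sum>i\<in>A. mom_functional m (f i))"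
  by (induction A rule: infinite_finite_induct) (auto simp: mom_functional_add)

lemma pcompose_power_left: "(p ^ n) \<circ>\<^sub>p r = (p \<circ>\<^sub>p r) ^ n"
  by (induction n) (simp_all add: pcompose_1 pcompose_mult)

lemma pcompose_eq_sum_powers: "p \<circ>\<^sub>p r = (\<Sum>i\<le>degree p. smult (coeff p i) (r ^ i))"
proof -
  have "p \<circ>\<^sub>p r = (\<Sum>i\<le>degree p. monom (coeff p i) i) \<circ>\<^sub>p r"
    by (simp add: poly_as_sum_of_monoms)
  also have "\<dots> = (\<Sum>i\<le>degree p. smult (coeff p i) (r ^ i))"
    by (simp add: pcompose_sum monom_altdef pcompose_smult pcompose_power_left pcompose_pCons)
  finally show ?thesis .
qed

lemma mom_functional_pcompose:
  assumes "\<And>i. mom_functional m (r ^ i) = m' i"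
  shows "mom_functional m (p \<circ>\<^sub>p r) = mom_functional m' p"
  unfolding pcompose_eq_sum_powers mom_functional_sum mom_functional_smult assms
  by (simp add: mom_functional_def)

lemma linear_functional_eq_leading_coeff:
  fixes \<Lambda> :: "'a::field poly \<Rightarrow> 'a" and B :: "nat \<Rightarrow> 'a poly"
  assumes add: "\<And>p r. \<Lambda> (p + r) = \<Lambda> p + \<Lambda> r" and smult: "\<And>a p. \<Lambda> (smult a p) = a * \<Lambda> p"
    and degree_B: "\<And>j. degree (B j) = j" and B_nonzero: "\<And>j. B j \<noteq> 0"
    and vanish: "\<And>j. j < n \<Longrightarrow> \<Lambda> (B j) = 0"
    and "degree f \<le> n"
  shows "\<Lambda> f = coeff f n / lead_coeff (B n) * \<Lambda> (B n)"
  using vanish \<open>degree f \<le> n\<close>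
proof (induction n arbitrary: f)
  case 0
  then have "f = smult (coeff f 0 / lead_coeff (B 0)) (B 0)"
    using B_nonzero[of 0] degree_B[of 0] by (auto elim!: degree_eq_zeroE)
  then show ?case
    by (metis smult)
next
  case (Suc n)
  define c where "c = coeff f (Suc n) / lead_coeff (B (Suc n))"
  define g where "g = f - smult c (B (Suc n))"
  have "lead_coeff (B (Suc n)) \<noteq> 0"
    using B_nonzero by simp
  have "coeff g i = 0" if "n < i" for i
  proof (cases "i = Suc n")
    case True
    then show ?thesis
      using \<open>lead_coeff (B (Suc n)) \<noteq> 0\<close> degree_B[of "Suc n"] by (simp add: g_def c_def)
  next
    case False
    then show ?thesis
      using that Suc.prems(2) degree_B[of "Suc n"] by (simp add: g_def coeff_eq_0)
  qed
  then have "degree g \<le> n"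
    by (simp add: degree_le)
  then have "\<Lambda> g = 0"
    using Suc.IH[of g] Suc.prems(1) by simp
  have "\<Lambda> f = \<Lambda> (g + smult c (B (Suc n)))"
    by (simp add: g_def)
  also have "\<dots> = c * \<Lambda> (B (Suc n))"
    by (simp only: add smult \<open>\<Lambda> g = 0\<close> add_0)
  finally show ?case
    by (simp add: c_def)
qed

section \<open>The Jackson mean on \<open>[1, 1 + (q - 1) z]\<close>\<close>

text \<open>\<open>jackson_mean q z i = (S - 1)\<^sup>-\<^sup>1 \<integral>\<^sub>1\<^sup>S x\<^sup>i d\<^sub>qx\<close> with \<open>S = 1 + (q - 1) z\<close>.\<close>

definition jackson_mean :: "'a::field \<Rightarrow> 'a \<Rightarrow> nat \<Rightarrow> 'a" where
  "jackson_mean q z i = ((1 + (q - 1) * z) ^ Suc i - 1) / (z * (q ^ Suc i - 1))"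

text \<open>The hypothesis says that \<open>h\<close> is the \<open>q\<close>-derivative \<open>(g(x) - g(qx)) / ((1 - q) x)\<close> of \<open>g\<close>:
  this is the fundamental theorem of \<open>q\<close>-calculus.\<close>

lemma mom_functional_jackson_mean_qderiv:
  fixes q z :: "'a::field"
  assumes q_not_root_of_unity: "\<And>m. m > 0 \<Longrightarrow> q ^ m \<noteq> 1" and "z \<noteq> 0"
    and qderiv: "smult (1 - q) ([:0, 1:] * h) = g - g \<circ>\<^sub>p [:0, q:]"
  shows "mom_functional (jackson_mean q z) h = (poly g (1 + (q - 1) * z) - poly g 1) / (z * (q - 1))"
proof -
  define S where "S = 1 + (q - 1) * z"
  define N where "N = max (degree h) (degree g)"
  have "q \<noteq> 1"
    using q_not_root_of_unity[of 1] by auto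
  have coeff_h: "(1 - q) * coeff h i = (1 - q ^ Suc i) * coeff g (Suc i)" for i
    using arg_cong[OF qderiv, of "\<lambda>p. coeff p (Suc i)"]
    by (simp add: coeff_pcompose_linear algebra_simps)
  have summand: "coeff h i * jackson_mean q z i = coeff g (Suc i) * (S ^ Suc i - 1) / (z * (q - 1))" for i
  proof -
    have "q ^ Suc i \<noteq> 1"
      using q_not_root_of_unity by blast
    moreover have "coeff h i = (q ^ Suc i - 1) / (q - 1) * coeff g (Suc i)"
      using coeff_h[of i] \<open>q \<noteq> 1\<close> by (simp add: field_simps)
    ultimately show ?thesis
      using \<open>q \<noteq> 1\<close> \<open>z \<noteq> 0\<close> by (simp add: jackson_mean_def S_def)
  qed
  have poly_g: "poly g x = (\<Sum>i\<le>Suc N. coeff g i * x ^ i)" for x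
    unfolding poly_altdef by (rule sum.mono_neutral_left) (auto simp: N_def coeff_eq_0)
  have "mom_functional (jackson_mean q z) h = (\<Sum>i\<le>N. coeff g (Suc i) * (S ^ Suc i - 1)) / (z * (q - 1))"
    by (simp add: mom_functional_eq_sum_atMost[of h N] N_def summand sum_divide_distrib)
  also have "(\<Sum>i\<le>N. coeff g (Suc i) * (S ^ Suc i - 1)) = (\<Sum>i\<le>Suc N. coeff g i * (S ^ i - 1))"
    by (subst sum.atMost_Suc_shift) simp
  also have "\<dots> = poly g S - poly g 1"
    by (simp add: poly_g algebra_simps sum_subtractf)
  finally show ?thesis
    by (simp add: S_def)
qed

locale jackson_weight =
  fixes q z :: "'a::field"
  assumes q_nonzero: "q \<noteq> 0"
    and q_not_root_of_unity: "\<And>m. m > 0 \<Longrightarrow> q ^ m \<noteq> 1"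
    and z_nonzero: "z \<noteq> 0"
    and endpoint_nonzero: "1 + (q - 1) * z \<noteq> 0"
begin

definition S :: 'a where "S = 1 + (q - 1) * z"

abbreviation L :: "'a poly \<Rightarrow> 'a" where "L \<equiv> mom_functional (jackson_mean q z)"

lemma S_nonzero: "S \<noteq> 0"
  using endpoint_nonzero by (simp add: S_def)

lemma S_minus_1: "S - 1 = (q - 1) * z"
  by (simp add: S_def)

lemma q_ne_1: "q \<noteq> 1"
  using q_not_root_of_unity[of 1] by auto

lemma qpoch_q_nonzero: "qpoch q q k \<noteq> 0"
  using qpoch_power_nonzero[OF q_not_root_of_unity, of 1] by simp

lemma mean_qdiff_qpoch_poly_product:
  "L (qpoch_poly q (a * q) k * qpoch_poly q (b * q) j *
       [:a * (q ^ Suc k - 1) + b * (q ^ Suc j - 1), a * b * (1 - q ^ (k + j + 2)):]) =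
   (qpoch a q (Suc k) * qpoch b q (Suc j) - qpoch (a * S) q (Suc k) * qpoch (b * S) q (Suc j)) / z"
  (is "L ?h = _")
proof -
  define g where "g = qpoch_poly q a (Suc k) * qpoch_poly q b (Suc j)"
  have poly_g: "poly g x = qpoch (a * x) q (Suc k) * qpoch (b * x) q (Suc j)" for x
    by (simp only: g_def poly_mult poly_qpoch_poly)
  have "smult (1 - q) ([:0, 1:] * smult (1 / (1 - q)) ?h) = g - g \<circ>\<^sub>p [:0, q:]"
    using q_ne_1 by (simp add: g_def qdiff_qpoch_poly_product mult.assoc)
  then have "L (smult (1 / (1 - q)) ?h) = (poly g S - poly g 1) / (z * (q - 1))"
    using mom_functional_jackson_mean_qderiv[OF q_not_root_of_unity z_nonzero] by (simp add: S_def)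
  moreover have "L ?h = (1 - q) * L (smult (1 / (1 - q)) ?h)"
    using q_ne_1 by (simp only: mom_functional_smult) simp
  ultimately have "L ?h = (1 - q) * ((poly g S - poly g 1) / (z * (q - 1)))"
    by simp
  also have "\<dots> = (poly g 1 - poly g S) / z"
    using q_ne_1 z_nonzero by (simp add: field_simps)
  finally show ?thesis
    by (simp only: poly_g mult_1_right)
qed

lemma mean_qpoch_poly_endpoint:
  "L (qpoch_poly q (q / S) j) = (q - 1) * qpoch (q / S) q j / (q ^ Suc j - 1)"
proof -
  have "(1 - 1 / S) / z = (S - 1) / (z * S)"
    using S_nonzero z_nonzero by (simp add: field_simps)
  then have ratio: "(1 - 1 / S) / z = (q - 1) / S"
    using z_nonzero by (simp add: S_minus_1)
  have "(q ^ Suc j - 1) / S * L (qpoch_poly q (q / S) j) = (1 - 1 / S) / z * qpoch (q / S) q j"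
    using mean_qdiff_qpoch_poly_product[of 0 0 "1 / S" j] S_nonzero
    by (simp add: qpoch_Suc_left mom_functional_smult mult.commute)
  then have "(q ^ Suc j - 1) * L (qpoch_poly q (q / S) j) = (q - 1) * qpoch (q / S) q j"
    unfolding ratio using S_nonzero by (simp add: field_simps)
  moreover have "q ^ Suc j \<noteq> 1"
    using q_not_root_of_unity by blast
  ultimately show ?thesis
    by (simp add: field_simps)
qed

lemma mean_qpoch_poly_product_Suc:
  "L (qpoch_poly q q (Suc k) * qpoch_poly q (q / S) j) =
     (1 - q ^ Suc k) * (1 - q ^ Suc k * S) / (1 - q ^ (k + j + 2)) *
     L (qpoch_poly q q k * qpoch_poly q (q / S) j)"
proof -
  define X where "X = q ^ Suc k"
  define A where "A = qpoch_poly q q k"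
  define B where "B = qpoch_poly q (q / S) j"
  define \<alpha> where "\<alpha> = (X - 1) + (q ^ Suc j - 1) / S"
  define \<beta> where "\<beta> = (1 - q ^ (k + j + 2)) / S"
  have "X \<noteq> 0"
    using q_nonzero by (simp add: X_def)
  have "\<beta> \<noteq> 0"
    using q_not_root_of_unity[of "k + j + 2"] S_nonzero by (simp add: \<beta>_def)
  have A_Suc: "qpoch_poly q q (Suc k) = A * [:1, - X:]"
    by (simp add: A_def X_def qpoch_poly_Suc mult.commute)
  txt \<open>\<open>(x; q)\<^sub>k\<^sub>+\<^sub>1 (x/S; q)\<^sub>j\<^sub>+\<^sub>1\<close> vanishes at both endpoints \<open>1\<close> and \<open>S\<close>.\<close>
  have "L (A * B * [:\<alpha>, \<beta>:]) = 0"
    using mean_qdiff_qpoch_poly_product[of 1 k "1 / S" j] S_nonzero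
    by (simp add: A_def B_def \<alpha>_def \<beta>_def X_def qpoch_Suc_left)
  moreover have "[:\<alpha>, \<beta>:] = [:\<alpha> + \<beta> / X:] - smult (\<beta> / X) [:1, - X:]"
    using \<open>X \<noteq> 0\<close> by simp
  moreover have "A * B * ([:c:] - smult d D) = smult c (A * B) - smult d (A * D * B)" for c d D
    by (simp add: algebra_simps)
  ultimately have "(\<alpha> + \<beta> / X) * L (A * B) - (\<beta> / X) * L (A * [:1, - X:] * B) = 0"
    by (simp only: mom_functional_diff mom_functional_smult)
  then have "(\<beta> / X) * L (A * [:1, - X:] * B) = (\<alpha> + \<beta> / X) * L (A * B)"
    by simp
  then have "L (qpoch_poly q q (Suc k) * B) = (\<alpha> * X + \<beta>) / \<beta> * L (A * B)"
    using \<open>X \<noteq> 0\<close> \<open>\<beta> \<noteq> 0\<close> by (simp add: A_Suc field_simps)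
  also have "(\<alpha> * X + \<beta>) / \<beta> = (1 - X) * (1 - X * S) / (1 - q ^ (k + j + 2))"
    using S_nonzero \<open>\<beta> \<noteq> 0\<close>
    by (simp add: \<alpha>_def \<beta>_def X_def field_simps power_add)
  finally show ?thesis
    by (simp add: A_def B_def X_def)
qed

lemma mean_qpoch_poly_product:
  "L (qpoch_poly q q k * qpoch_poly q (q / S) j) =
     (q - 1) * qpoch (q / S) q j / (q ^ Suc j - 1) *
     (qpoch q q k * qpoch (q * S) q k / qpoch (q ^ (j + 2)) q k)"
proof (induction k)
  case 0
  then show ?case
    by (simp add: mean_qpoch_poly_endpoint)
next
  case (Suc k)
  have "qpoch (q ^ (j + 2)) q k \<noteq> 0"
    using qpoch_power_nonzero[OF q_not_root_of_unity, of "j + 2" k] by simp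
  moreover have "1 - q ^ (k + j + 2) \<noteq> 0"
    using q_not_root_of_unity[of "k + j + 2"] by simp
  ultimately show ?case
    by (simp add: mean_qpoch_poly_product_Suc Suc.IH qpoch_Suc field_simps power_add)
qed

end

section \<open>The \<open>q\<close>-Chu--Vandermonde sum\<close>

definition phi21_term :: "'a::field \<Rightarrow> 'a \<Rightarrow> 'a \<Rightarrow> nat \<Rightarrow> nat \<Rightarrow> 'a" where
  "phi21_term q b c n k =
     qpoch (inverse (q ^ n)) q k * qpoch b q k * q ^ k / (qpoch q q k * qpoch c q k)"

lemma phi21_term_0 [simp]: "phi21_term q b c n 0 = 1"
  by (simp add: phi21_term_def)

lemma phi21_term_Suc:
  "phi21_term q b c n (Suc k) = phi21_term q b c n k *
     ((1 - q ^ k * inverse (q ^ n)) * (1 - q ^ k * b) * q / ((1 - q ^ k * q) * (1 - q ^ k * c)))"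
  by (simp add: phi21_term_def qpoch_Suc mult_ac)

lemma phi21_term_Suc_Suc:
  fixes q :: "'a::field"
  assumes "q \<noteq> 0"
  shows "phi21_term q b c (Suc n) (Suc k) = phi21_term q b c n k *
     ((1 - inverse (q ^ Suc n)) * (1 - q ^ k * b) * q / ((1 - q ^ k * q) * (1 - q ^ k * c)))"
proof -
  have "inverse (q ^ Suc n) * q = inverse (q ^ n)"
    using assms by (simp add: field_simps)
  then have "qpoch (inverse (q ^ Suc n)) q (Suc k) = (1 - inverse (q ^ Suc n)) * qpoch (inverse (q ^ n)) q k"
    by (simp only: qpoch_Suc_left)
  then show ?thesis
    unfolding phi21_term_def qpoch_Suc[of b] qpoch_Suc[of q] qpoch_Suc[of c] by (simp add: mult_ac)
qed

lemma phi21_term_telescoping: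
  fixes q b c :: "'a::field" and n k :: nat
  assumes "q \<noteq> 0" "q ^ Suc k \<noteq> 1" "c * q ^ k \<noteq> 1"
  defines "G \<equiv> \<lambda>k. phi21_term q b c n k * (1 - b * q ^ k) / q ^ k"
  shows "(1 - c * q ^ n) * phi21_term q b c (Suc n) (Suc k) - (b - c * q ^ n) * phi21_term q b c n (Suc k) =
      G (Suc k) - G k"
proof -
  define X where "X = q ^ k"
  define Y where "Y = inverse (q ^ n)"
  define T where "T = phi21_term q b c n k"
  have nonzero: "X \<noteq> 0" "Y \<noteq> 0" "1 - X * q \<noteq> 0" "1 - X * c \<noteq> 0"
    using assms(1-3) by (auto simp: X_def Y_def mult.commute)
  have substitutions: "inverse (q ^ Suc n) = Y / q" "c * q ^ n = c / Y" "q ^ Suc k = X * q"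
    by (simp_all add: X_def Y_def field_simps)
  txt \<open>The common denominator \<open>D\<close> is kept abstract so that \<open>field_simps\<close> can clear it.\<close>
  have key:
    "(1 - c / Y) * (T * ((1 - Y / q) * (1 - X * b) * q / D)) -
       (b - c / Y) * (T * ((1 - X * Y) * (1 - X * b) * q / D)) =
     T * ((1 - X * Y) * (1 - X * b) * q / D) * (1 - b * (X * q)) / (X * q) - T * (1 - b * X) / X"
    if "D = (1 - X * q) * (1 - X * c)" for D
  proof -
    have "D \<noteq> 0"
      using nonzero that by simp
    with nonzero assms(1) show ?thesis
      by (simp add: field_simps) (simp add: that algebra_simps)
  qed
  show ?thesis
    using substitutions key[OF refl]
    by (simp only: G_def phi21_term_Suc[of q b c n k] phi21_term_Suc_Suc[OF assms(1)]
        X_def[symmetric] Y_def[symmetric] T_def[symmetric])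
qed

lemma q_chu_vandermonde:
  fixes q b c :: "'a::field"
  assumes q_nonzero: "q \<noteq> 0" and q_not_root_of_unity: "\<And>m. m > 0 \<Longrightarrow> q ^ m \<noteq> 1"
    and c_generic: "\<And>i. c * q ^ i \<noteq> 1"
  shows "(\<Sum>k\<le>n. phi21_term q b c n k) = (\<Prod>i<n. (b - c * q ^ i) / (1 - c * q ^ i))"
proof (induction n)
  case 0
  then show ?case
    by simp
next
  case (Suc n)
  define G where "G k = phi21_term q b c n k * (1 - b * q ^ k) / q ^ k" for k
  have vanish: "phi21_term q b c n (Suc n) = 0"
    using q_nonzero by (auto simp: phi21_term_def qpoch_eq_0_iff)
  have "(1 - c * q ^ n) * (\<Sum>k\<le>Suc n. phi21_term q b c (Suc n) k) -
        (b - c * q ^ n) * (\<Sum>k\<le>Suc n. phi21_term q b c n k) =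
      (\<Sum>k\<le>Suc n. (1 - c * q ^ n) * phi21_term q b c (Suc n) k - (b - c * q ^ n) * phi21_term q b c n k)"
    by (simp only: sum_distrib_left sum_subtractf)
  also have "\<dots> = G 0 + (\<Sum>k<Suc n. G (Suc k) - G k)"
  proof -
    have "(1 - c * q ^ n) * phi21_term q b c (Suc n) (Suc k) - (b - c * q ^ n) * phi21_term q b c n (Suc k) =
        G (Suc k) - G k" for k
      unfolding G_def by (rule phi21_term_telescoping[OF q_nonzero q_not_root_of_unity c_generic]) simp
    then show ?thesis
      unfolding sum.atMost_Suc_shift lessThan_Suc_atMost by (simp add: G_def)
  qed
  also have "\<dots> = 0"
    by (simp only: sum_lessThan_telescope) (simp add: G_def vanish)
  finally have "(1 - c * q ^ n) * (\<Sum>k\<le>Suc n. phi21_term q b c (Suc n) k) =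
      (b - c * q ^ n) * (\<Sum>k\<le>n. phi21_term q b c n k)"
    by (simp add: vanish)
  moreover have "1 - c * q ^ n \<noteq> 0"
    using c_generic[of n] by simp
  ultimately show ?case
    by (simp add: Suc.IH field_simps)
qed

section \<open>Big \<open>q\<close>-Legendre polynomials\<close>

text \<open>\<open>poly (big_qlegendre q c n) u\<close> is the big \<open>q\<close>-Legendre polynomial
  \<open>P\<^sub>n(qu; c; q) = \<^sub>3\<phi>\<^sub>2(q\<^sup>-\<^sup>n, q\<^sup>n\<^sup>+\<^sup>1, qu; q, cq; q, q)\<close>.\<close>

definition big_qlegendre_coeff :: "'a::field \<Rightarrow> 'a \<Rightarrow> nat \<Rightarrow> nat \<Rightarrow> 'a" where
  "big_qlegendre_coeff q c n k = qpoch (inverse (q ^ n)) q k * qpoch (q ^ (n + 1)) q k * q ^ k /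
     (qpoch q q k * qpoch q q k * qpoch (q * c) q k)"

definition big_qlegendre :: "'a::field \<Rightarrow> 'a \<Rightarrow> nat \<Rightarrow> 'a poly" where
  "big_qlegendre q c n = (\<Sum>k\<le>n. smult (big_qlegendre_coeff q c n k) (qpoch_poly q q k))"

locale big_qlegendre_weight = jackson_weight +
  assumes endpoint_times_qpower_ne_1: "\<And>m. (1 + (q - 1) * z) * q ^ Suc m \<noteq> 1"
    and qpower_ne_endpoint: "\<And>m. q ^ Suc m \<noteq> 1 + (q - 1) * z"
begin

abbreviation P :: "nat \<Rightarrow> 'a poly" where "P \<equiv> big_qlegendre q S"

lemma qpoch_q_times_S_nonzero: "qpoch (q * S) q k \<noteq> 0"
  using endpoint_times_qpower_ne_1 by (auto simp: qpoch_eq_0_iff S_def mult_ac)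

lemma qpoch_q_over_S_nonzero: "qpoch (q / S) q k \<noteq> 0"
  using qpower_ne_endpoint S_nonzero by (auto simp: qpoch_eq_0_iff S_def field_simps)

lemma mean_big_qlegendre_times_qpoch_poly:
  "L (P n * qpoch_poly q (q / S) j) = (q - 1) * qpoch (q / S) q j / (q ^ Suc j - 1) *
     (\<Prod>i<n. (q ^ (n + 1) - q ^ (j + 2) * q ^ i) / (1 - q ^ (j + 2) * q ^ i))"
proof -
  have "a / (Q * Q * Q') * (m * (Q * Q' / R)) = m * (a / (Q * R))" if "Q \<noteq> 0" "Q' \<noteq> 0"
    for a m Q Q' R :: 'a
    using that by (simp add: field_simps)
  then have "big_qlegendre_coeff q S n k * L (qpoch_poly q q k * qpoch_poly q (q / S) j) =
      (q - 1) * qpoch (q / S) q j / (q ^ Suc j - 1) * phi21_term q (q ^ (n + 1)) (q ^ (j + 2)) n k" for k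
    unfolding mean_qpoch_poly_product big_qlegendre_coeff_def phi21_term_def
    using qpoch_q_nonzero qpoch_q_times_S_nonzero by blast
  then have "L (P n * qpoch_poly q (q / S) j) = (q - 1) * qpoch (q / S) q j / (q ^ Suc j - 1) *
      (\<Sum>k\<le>n. phi21_term q (q ^ (n + 1)) (q ^ (j + 2)) n k)"
    by (simp add: big_qlegendre_def sum_distrib_left sum_distrib_right mom_functional_sum
        mom_functional_smult mult.assoc)
  also have "(\<Sum>k\<le>n. phi21_term q (q ^ (n + 1)) (q ^ (j + 2)) n k) =
      (\<Prod>i<n. (q ^ (n + 1) - q ^ (j + 2) * q ^ i) / (1 - q ^ (j + 2) * q ^ i))"
  proof (rule q_chu_vandermonde[OF q_nonzero q_not_root_of_unity])
    show "q ^ (j + 2) * q ^ i \<noteq> 1" for i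
      using q_not_root_of_unity[of "j + 2 + i"] by (simp add: power_add mult_ac)
  qed
  finally show ?thesis .
qed

lemma mean_big_qlegendre_times_qpoch_poly_eq_0:
  assumes "j < n"
  shows "L (P n * qpoch_poly q (q / S) j) = 0"
proof -
  have "j + 2 + (n - 1 - j) = n + 1"
    using assms by simp
  then have "q ^ (j + 2) * q ^ (n - 1 - j) = q ^ (n + 1)"
    by (metis power_add)
  then have "\<exists>i<n. q ^ (n + 1) - q ^ (j + 2) * q ^ i = 0"
    using assms by (intro exI[of _ "n - 1 - j"]) auto
  then show ?thesis
    by (auto simp: mean_big_qlegendre_times_qpoch_poly)
qed

lemma mean_big_qlegendre_times_qpoch_poly_diag_nonzero:
  "L (P n * qpoch_poly q (q / S) n) \<noteq> 0"
proof -
  have "q ^ (n + 1) - q ^ (n + 2) * q ^ i \<noteq> 0" for i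
  proof -
    have "q ^ (n + 1) - q ^ (n + 2) * q ^ i = q ^ (n + 1) * (1 - q ^ Suc i)"
      by (simp add: algebra_simps power_add)
    then show ?thesis
      using q_nonzero q_not_root_of_unity[of "Suc i"] by simp
  qed
  moreover have "1 - q ^ (n + 2) * q ^ i \<noteq> 0" for i
    using q_not_root_of_unity[of "n + 2 + i"] by (simp add: power_add mult_ac)
  moreover have "q ^ Suc n \<noteq> 1"
    using q_not_root_of_unity by blast
  ultimately show ?thesis
    using q_ne_1 qpoch_q_over_S_nonzero
    by (simp add: mean_big_qlegendre_times_qpoch_poly)
qed

lemma big_qlegendre_coeff_diag_nonzero: "big_qlegendre_coeff q S n n \<noteq> 0"
proof -
  have "qpoch (inverse (q ^ n)) q n \<noteq> 0"
  proof
    assume "qpoch (inverse (q ^ n)) q n = 0"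
    then obtain j where "j < n" "q ^ j * inverse (q ^ n) = 1"
      by (auto simp: qpoch_eq_0_iff)
    then have "q ^ j = q ^ n"
      using q_nonzero by (simp add: field_simps)
    moreover have "q ^ n = q ^ j * q ^ (n - j)"
      using \<open>j < n\<close> by (simp flip: power_add)
    ultimately have "q ^ (n - j) = 1"
      using q_nonzero by simp
    then show False
      using q_not_root_of_unity[of "n - j"] \<open>j < n\<close> by simp
  qed
  moreover have "qpoch (q ^ (n + 1)) q n \<noteq> 0"
    using qpoch_power_nonzero[OF q_not_root_of_unity, of "n + 1" n] by simp
  ultimately show ?thesis
    using q_nonzero qpoch_q_nonzero qpoch_q_times_S_nonzero by (simp add: big_qlegendre_coeff_def)
qed

lemma degree_big_qlegendre: "degree (P n) = n"
  and coeff_big_qlegendre_nonzero: "coeff (P n) n \<noteq> 0"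
proof -
  have degree_qpoch_poly_q: "degree (qpoch_poly q q k) = k" for k
    using q_nonzero by (simp add: degree_qpoch_poly)
  have "coeff (P n) n = big_qlegendre_coeff q S n n * lead_coeff (qpoch_poly q q n)"
    unfolding big_qlegendre_def coeff_sum coeff_smult
    by (subst sum.remove[of _ n]) (auto intro!: sum.neutral simp: coeff_eq_0 degree_qpoch_poly_q)
  then show "coeff (P n) n \<noteq> 0"
    using big_qlegendre_coeff_diag_nonzero lead_coeff_qpoch_poly_nonzero q_nonzero by simp
  moreover have "degree (P n) \<le> n"
    unfolding big_qlegendre_def
    by (intro degree_sum_le) (auto intro: order.trans[OF degree_smult_le] simp: degree_qpoch_poly_q)
  ultimately show "degree (P n) = n"
    by (simp add: le_antisym le_degree)
qed

lemma mean_big_qlegendre_times_degree_le: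
  assumes "degree f \<le> n"
  shows "L (P n * f) = coeff f n / lead_coeff (qpoch_poly q (q / S) n) * L (P n * qpoch_poly q (q / S) n)"
proof (rule linear_functional_eq_leading_coeff[where \<Lambda> = "\<lambda>f. L (P n * f)"])
  have "q / S \<noteq> 0"
    using q_nonzero S_nonzero by simp
  then show "degree (qpoch_poly q (q / S) j) = j" "qpoch_poly q (q / S) j \<noteq> 0" for j
    using degree_qpoch_poly[OF q_nonzero] lead_coeff_qpoch_poly_nonzero[OF q_nonzero, of "q / S" j]
    by auto
qed (simp_all add: assms distrib_left mom_functional_add mom_functional_smult
    mean_big_qlegendre_times_qpoch_poly_eq_0)

lemma mean_big_qlegendre_orthogonal:
  assumes "m \<noteq> n"
  shows "L (P m * P n) = 0"
proof -
  have "L (P n * P m) = 0" if "m < n" for m n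
    using mean_big_qlegendre_times_degree_le[of "P m" n] that
    by (simp add: degree_big_qlegendre coeff_eq_0)
  then show ?thesis
    using assms by (metis linorder_neqE_nat mult.commute)
qed

lemma mean_big_qlegendre_square_nonzero: "L (P n * P n) \<noteq> 0"
  using mean_big_qlegendre_times_degree_le[of "P n" n] coeff_big_qlegendre_nonzero[of n]
    mean_big_qlegendre_times_qpoch_poly_diag_nonzero[of n]
    lead_coeff_qpoch_poly_nonzero[of q "q / S" n] q_nonzero S_nonzero
  by (simp add: degree_big_qlegendre)

theorem moments_of_big_qlegendre:
  assumes moments: "\<And>i. mom_functional m ([:1, q - 1:] ^ i) = jackson_mean q z i"
  shows "moments_of m (\<lambda>n. P n \<circ>\<^sub>p [:1, q - 1:])"
  unfolding moments_of_def
proof (intro conjI allI impI)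
  have transfer: "mom_functional m ((P k \<circ>\<^sub>p [:1, q - 1:]) * (P n \<circ>\<^sub>p [:1, q - 1:])) = L (P k * P n)" for k n
    unfolding pcompose_mult[symmetric] by (rule mom_functional_pcompose[OF moments])
  show "m 0 = 1"
    using moments[of 0] z_nonzero q_ne_1 by (simp add: mom_functional_1 jackson_mean_def)
  show "degree (P n \<circ>\<^sub>p [:1, q - 1:]) = n" for n
    using q_ne_1 by (simp add: degree_pcompose degree_big_qlegendre)
  show "mom_functional m ((P k \<circ>\<^sub>p [:1, q - 1:]) * (P n \<circ>\<^sub>p [:1, q - 1:])) = 0" if "k \<noteq> n" for k n
    unfolding transfer by (rule mean_big_qlegendre_orthogonal[OF that])
  show "mom_functional m ((P n \<circ>\<^sub>p [:1, q - 1:]) ^ 2) \<noteq> 0" for n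
    unfolding power2_eq_square transfer by (rule mean_big_qlegendre_square_nonzero)
qed

end

section \<open>Moments of the integrated \<open>q\<close>-Bernoulli--Carlitz polynomials\<close>

lemma carlitz_functional_qdiff:
  fixes \<beta> :: "nat \<Rightarrow> 'a::field" and q :: 'a
  assumes carlitz: "\<And>n. q * (\<Sum>k\<le>n. of_nat (n choose k) * q ^ k * \<beta> k) - \<beta> n
                 = (if n = 0 then q - 1 else if n = 1 then 1 else 0)"
  shows "mom_functional \<beta> (smult q (p \<circ>\<^sub>p [:1, q:]) - p) = (q - 1) * coeff p 0 + coeff p 1"
proof -
  have monomial: "mom_functional \<beta> (smult q ([:1, q:] ^ i) - monom 1 i) =
      (if i = 0 then q - 1 else if i = 1 then 1 else 0)" for i
  proof -
    have "mom_functional \<beta> ([:1, q:] ^ i) = (\<Sum>k\<le>i. of_nat (i choose k) * q ^ k * \<beta> k)"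
      by (simp add: mom_functional_eq_sum_atMost[OF degree_linear_power_le] coeff_linear_power)
    moreover have "mom_functional \<beta> (monom 1 i) = \<beta> i"
      by (simp add: mom_functional_eq_sum_atMost[of "monom 1 i" i] degree_monom_le
          if_distrib[where f = "\<lambda>x. x * _"] cong: if_cong)
    ultimately show ?thesis
      using carlitz[of i] by (simp add: mom_functional_diff mom_functional_smult)
  qed
  have "smult q (p \<circ>\<^sub>p [:1, q:]) - p =
      smult q (\<Sum>i\<le>degree p. smult (coeff p i) ([:1, q:] ^ i)) - (\<Sum>i\<le>degree p. monom (coeff p i) i)"
    by (simp only: pcompose_eq_sum_powers poly_as_sum_of_monoms)
  also have "\<dots> = (\<Sum>i\<le>degree p. smult (coeff p i) (smult q ([:1, q:] ^ i) - monom 1 i))"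
    by (simp add: smult_diff_right sum_subtractf smult_sum_right smult_monom mult.commute)
  finally have "mom_functional \<beta> (smult q (p \<circ>\<^sub>p [:1, q:]) - p) =
      (\<Sum>i\<le>degree p. coeff p i * (if i = 0 then q - 1 else if i = 1 then 1 else 0))"
    by (simp only: mom_functional_sum mom_functional_smult monomial)
  also have "\<dots> = (\<Sum>i\<le>degree p. (if i = 0 then (q - 1) * coeff p 0 else 0) + (if i = 1 then coeff p 1 else 0))"
    by (rule sum.cong) auto
  also have "\<dots> = (q - 1) * coeff p 0 + coeff p 1"
    by (simp add: sum.distrib coeff_eq_0)
  finally show ?thesis .
qed

lemma carlitz_functional_linear_power:
  fixes \<beta> :: "nat \<Rightarrow> 'a::field" and q :: 'a
  assumes carlitz: "\<And>n. q * (\<Sum>k\<le>n. of_nat (n choose k) * q ^ k * \<beta> k) - \<beta> n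
                 = (if n = 0 then q - 1 else if n = 1 then 1 else 0)"
  shows "(q ^ Suc m - 1) * mom_functional \<beta> ([:1, q - 1:] ^ m) = (q - 1) * of_nat (Suc m)"
proof -
  have "[:1, q - 1:] \<circ>\<^sub>p [:1, q:] = smult q [:1, q - 1:]"
    by (simp add: pcompose_pCons algebra_simps)
  then have "([:1, q - 1:] ^ m) \<circ>\<^sub>p [:1, q:] = smult (q ^ m) ([:1, q - 1:] ^ m)"
    by (simp only: pcompose_power_left smult_power)
  then show ?thesis
    using carlitz_functional_qdiff[OF carlitz, of "[:1, q - 1:] ^ m"]
    by (simp add: mom_functional_diff mom_functional_smult coeff_linear_power algebra_simps)
qed

lemma coeff_poly_integral:
  "coeff (poly_integral f) k = (if k = 0 then 0 else coeff f (k - 1) / of_nat k)"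
proof -
  have "coeff (poly_integral f) k = (\<Sum>i\<le>degree f. if i + 1 = k then coeff f i / of_nat (i + 1) else 0)"
    unfolding poly_integral_def coeff_sum by (intro sum.cong) auto
  also have "\<dots> = (if k = 0 then 0 else coeff f (k - 1) / of_nat k)"
    by (cases k) (auto simp: coeff_eq_0)
  finally show ?thesis .
qed

lemma poly_integral_add: "poly_integral (f + g) = poly_integral f + poly_integral g"
  by (rule poly_eqI) (simp add: coeff_poly_integral add_divide_distrib)

lemma poly_integral_smult: "poly_integral (smult a f) = smult a (poly_integral f)"
  by (rule poly_eqI) (simp add: coeff_poly_integral)

lemma poly_integral_sum: "poly_integral (\<Sum>i\<in>A. f i) = (\<Sum>i\<in>A. poly_integral (f i))"
proof (induction A rule: infinite_finite_induct)
  case (infinite A)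
  then show ?case
    by (simp add: poly_eq_iff coeff_poly_integral)
qed (simp_all add: poly_eq_iff coeff_poly_integral poly_integral_add)

lemma poly_integral_linear_power:
  fixes b :: "'a::field_char_0"
  shows "smult (of_nat (Suc m) * b) (poly_integral ([:1, b:] ^ m)) = [:1, b:] ^ Suc m - 1"
proof (rule poly_eqI)
  fix k
  show "coeff (smult (of_nat (Suc m) * b) (poly_integral ([:1, b:] ^ m))) k = coeff ([:1, b:] ^ Suc m - 1) k"
  proof (cases k)
    case 0
    then show ?thesis
      by (simp add: coeff_poly_integral coeff_linear_power)
  next
    case (Suc j)
    have "of_nat (Suc m) * of_nat (m choose j) = (of_nat (Suc m choose Suc j) * of_nat (Suc j) :: 'a)"
      by (metis Suc_times_binomial_eq of_nat_mult)
    then show ?thesis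
      using Suc by (simp add: coeff_poly_integral coeff_linear_power field_simps del: of_nat_Suc)
  qed
qed

lemma Psi_eq_mom_functional: "Psi \<beta> p = mom_functional (\<lambda>i. [:\<beta> i:]) p"
  by (simp add: Psi_def mom_functional_def mult.commute)

lemma carlitz_polynomials_binomial_sum:
  "(\<Sum>n\<le>m. smult (of_nat (m choose n) * (qQ - 1) ^ n) (qbc_poly \<beta> n)) =
     smult (mom_functional \<beta> ([:1, qQ - 1:] ^ m)) ([:1, qQ - 1:] ^ m)"
proof -
  define M where "M = mom_functional (\<lambda>i. [:\<beta> i:])"
  define B where "B = [: [:0, 1:], [:1, qQ - 1:] :]"
  define V where "V = [:1, [:qQ - 1:]:]"
  have "(\<Sum>n\<le>m. smult (of_nat (m choose n) * (qQ - 1) ^ n) (qbc_poly \<beta> n)) =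
      M (\<Sum>n\<le>m. smult [:of_nat (m choose n) * (qQ - 1) ^ n:] (B ^ n))"
    by (simp add: M_def B_def qbc_poly_def Psi_eq_mom_functional mom_functional_sum mom_functional_smult)
  also have "(\<Sum>n\<le>m. smult [:of_nat (m choose n) * (qQ - 1) ^ n:] (B ^ n)) = (smult [:qQ - 1:] B + 1) ^ m"
    unfolding binomial_ring
    by (intro sum.cong) (simp_all add: smult_power of_nat_poly poly_const_pow)
  also have "smult [:qQ - 1:] B + 1 = smult [:1, qQ - 1:] V"
    by (simp add: B_def V_def one_pCons algebra_simps)
  also have "M ((smult [:1, qQ - 1:] V) ^ m) = [:1, qQ - 1:] ^ m * M (V ^ m)"
    by (simp add: M_def smult_power mom_functional_smult)
  also have "M (V ^ m) = [:mom_functional \<beta> ([:1, qQ - 1:] ^ m):]"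
    by (simp add: M_def V_def mom_functional_eq_sum_atMost[OF degree_linear_power_le] coeff_linear_power
        of_nat_poly poly_const_pow sum_to_poly mult_ac)
  finally show ?thesis
    by (simp add: mult.commute)
qed

lemma carlitz_integrated_binomial_sum:
  fixes \<beta> :: "nat \<Rightarrow> qfield"
  assumes carlitz: "\<And>n. qQ * (\<Sum>k\<le>n. of_nat (n choose k) * qQ ^ k * \<beta> k) - \<beta> n
                 = (if n = 0 then qQ - 1 else if n = 1 then 1 else 0)"
  shows "smult (qQ ^ Suc m - 1)
      (\<Sum>n\<le>m. smult (of_nat (m choose n) * (qQ - 1) ^ n) (poly_integral (qbc_poly \<beta> n))) =
    [:1, qQ - 1:] ^ Suc m - 1"
proof -
  define w where "w = mom_functional \<beta> ([:1, qQ - 1:] ^ m)"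
  have "(\<Sum>n\<le>m. smult (of_nat (m choose n) * (qQ - 1) ^ n) (poly_integral (qbc_poly \<beta> n))) =
      poly_integral (\<Sum>n\<le>m. smult (of_nat (m choose n) * (qQ - 1) ^ n) (qbc_poly \<beta> n))"
    by (simp add: poly_integral_sum poly_integral_smult)
  also have "\<dots> = smult w (poly_integral ([:1, qQ - 1:] ^ m))"
    by (simp add: w_def carlitz_polynomials_binomial_sum poly_integral_smult)
  finally have "(\<Sum>n\<le>m. smult (of_nat (m choose n) * (qQ - 1) ^ n) (poly_integral (qbc_poly \<beta> n))) =
      smult w (poly_integral ([:1, qQ - 1:] ^ m))" .
  moreover have "(qQ ^ Suc m - 1) * w = of_nat (Suc m) * (qQ - 1)"
    using carlitz_functional_linear_power[OF carlitz, of m] by (simp add: w_def mult.commute)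
  ultimately show ?thesis
    using poly_integral_linear_power[of m "qQ - 1"] by (simp only: smult_smult)
qed

section \<open>Specialisation to \<open>\<rat>(q, z)\<close>\<close>

lemma Fract_power: "Fract (a ^ n) 1 = Fract a 1 ^ n"
proof (induction n)
  case (Suc n)
  have "Fract (a ^ Suc n) 1 = Fract a 1 * Fract (a ^ n) 1"
    by simp
  then show ?case
    by (simp add: Suc.IH)
qed (simp add: One_fract_def)

lemma Fract_sum: "Fract (\<Sum>i\<in>A. f i) 1 = (\<Sum>i\<in>A. Fract (f i) 1)"
proof (induction A rule: infinite_finite_induct)
  case (insert x A)
  have "Fract (\<Sum>i\<in>insert x A. f i) 1 = Fract (f x) 1 + Fract (\<Sum>i\<in>A. f i) 1"
    using insert.hyps by simp
  then show ?case
    using insert.hyps by (simp add: insert.IH)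
qed (simp_all add: Zero_fract_def)

lemma qQ_nonzero: "qQ \<noteq> 0"
  by (simp add: qQ_def Zero_fract_def[where 'a = "rat poly"] eq_fract)

lemma qQ_power_ne_1:
  assumes "m > 0"
  shows "qQ ^ m \<noteq> 1"
proof
  assume "qQ ^ m = 1"
  then have "[:0, 1:] ^ m = (1 :: rat poly)"
    by (simp add: qQ_def One_fract_def eq_fract flip: Fract_power)
  then have "degree ([:0, 1 :: rat:] ^ m) = 0"
    by simp
  then show False
    using assms by (simp add: degree_power_eq)
qed

lemma qK_power: "qK ^ n = Fract [:qQ ^ n:] 1"
  by (simp add: qK_def poly_const_pow flip: Fract_power)

lemma endpoint_qK_zK: "1 + (qK - 1) * zK = Fract [:1, qQ - 1:] 1"
proof -
  have "[:1, qQ - 1:] = 1 + ([:qQ:] - 1) * [:0, 1:]"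
    by (simp add: one_pCons)
  then show ?thesis
    by (simp add: qK_def zK_def One_fract_def[where 'a = "qfield poly"])
qed

lemma qK_power_ne_1:
  assumes "m > 0"
  shows "qK ^ m \<noteq> 1"
  using qQ_power_ne_1[OF assms]
  by (simp add: qK_power One_fract_def[where 'a = "qfield poly"] eq_fract one_pCons)

lemma big_qlegendre_weight_qK_zK: "big_qlegendre_weight qK zK"
proof unfold_locales
  have qQ_ne_1: "qQ - 1 \<noteq> 0"
    using qQ_power_ne_1[of 1] by simp
  show "qK \<noteq> 0"
    using qQ_nonzero by (simp add: qK_def Zero_fract_def[where 'a = "qfield poly"] eq_fract)
  show "qK ^ m \<noteq> 1" if "m > 0" for m
    using qK_power_ne_1[OF that] .
  show "zK \<noteq> 0"
    by (simp add: zK_def Zero_fract_def[where 'a = "qfield poly"] eq_fract)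
  show "1 + (qK - 1) * zK \<noteq> 0"
    by (simp add: endpoint_qK_zK Zero_fract_def[where 'a = "qfield poly"] eq_fract)
  show "(1 + (qK - 1) * zK) * qK ^ Suc m \<noteq> 1" for m
  proof
    assume "(1 + (qK - 1) * zK) * qK ^ Suc m = 1"
    moreover have "(1 + (qK - 1) * zK) * qK ^ Suc m = Fract ([:1, qQ - 1:] * [:qQ ^ Suc m:]) 1"
      by (simp only: endpoint_qK_zK qK_power mult_fract mult_1)
    ultimately have "[:1, qQ - 1:] * [:qQ ^ Suc m:] = 1"
      by (simp add: One_fract_def[where 'a = "qfield poly"] eq_fract)
    then have "coeff ([:1, qQ - 1:] * [:qQ ^ Suc m:]) 1 = coeff 1 1"
      by simp
    then show False
      using qQ_ne_1 qQ_nonzero by simp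
  qed
  show "qK ^ Suc m \<noteq> 1 + (qK - 1) * zK" for m
    unfolding endpoint_qK_zK qK_power using qQ_ne_1 by (simp add: eq_fract)
qed

lemma carlitz_moments_linear_power:
  fixes \<beta> :: "nat \<Rightarrow> qfield"
  assumes carlitz: "\<And>n. qQ * (\<Sum>k\<le>n. of_nat (n choose k) * qQ ^ k * \<beta> k) - \<beta> n
                 = (if n = 0 then qQ - 1 else if n = 1 then 1 else 0)"
  shows "mom_functional (\<lambda>n. Fract (poly_integral (qbc_poly \<beta> n)) 1 / zK) ([:1, qK - 1:] ^ m) =
    jackson_mean qK zK m"
proof -
  define c where "c n = of_nat (m choose n) * (qQ - 1) ^ n" for n
  define I where "I = (\<Sum>n\<le>m. smult (c n) (poly_integral (qbc_poly \<beta> n)))"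
  have "qK - 1 = Fract [:qQ - 1:] 1"
    by (simp add: qK_def One_fract_def[where 'a = "qfield poly"] one_pCons)
  then have coeff: "coeff ([:1, qK - 1:] ^ m) n = Fract [:c n:] 1" for n
    by (simp add: c_def coeff_linear_power of_nat_fract of_nat_poly poly_const_pow mult.commute
        flip: Fract_power)
  have "mom_functional (\<lambda>n. Fract (poly_integral (qbc_poly \<beta> n)) 1 / zK) ([:1, qK - 1:] ^ m) =
      Fract I 1 / zK"
    by (simp add: mom_functional_eq_sum_atMost[OF degree_linear_power_le] coeff I_def Fract_sum
        sum_divide_distrib)
  also have "Fract I 1 = ((1 + (qK - 1) * zK) ^ Suc m - 1) / (qK ^ Suc m - 1)"
  proof -
    have "(qK ^ Suc m - 1) * Fract I 1 = Fract (smult (qQ ^ Suc m - 1) I) 1"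
      unfolding qK_power by (simp add: One_fract_def[where 'a = "qfield poly"] one_pCons)
    also have "\<dots> = Fract ([:1, qQ - 1:] ^ Suc m - 1) 1"
      using carlitz_integrated_binomial_sum[OF carlitz, of m] by (simp add: I_def c_def)
    also have "\<dots> = (1 + (qK - 1) * zK) ^ Suc m - 1"
      unfolding endpoint_qK_zK Fract_power[symmetric] by (simp add: One_fract_def[where 'a = "qfield poly"])
    finally have "(qK ^ Suc m - 1) * Fract I 1 = (1 + (qK - 1) * zK) ^ Suc m - 1" .
    moreover have "qK ^ Suc m \<noteq> 1"
      by (rule qK_power_ne_1) simp
    ultimately show ?thesis
      by (simp add: field_simps)
  qed
  finally show ?thesis
    by (simp add: jackson_mean_def mult.commute)
qed

lemma P_seq_eq_big_qlegendre: "P_seq n = big_qlegendre qK (1 + (qK - 1) * zK) n \<circ>\<^sub>p [:1, qK - 1:]"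
proof -
  have "qpoch_poly q q k \<circ>\<^sub>p [:1, q - 1:] = qpoch (smult q [:1, q - 1:]) [:q:] k" for q :: qzfield and k
    unfolding qpoch_poly_def qpoch_def pcompose_prod
    by (intro prod.cong) (simp_all add: pcompose_pCons poly_const_pow algebra_simps)
  then show ?thesis
    by (simp add: P_seq_def big_qlegendre_def big_qlegendre_coeff_def pcompose_sum pcompose_smult)
qed

theorem mainTheorem6:
  fixes \<beta> :: "nat \<Rightarrow> qfield"
  assumes beta_def: "\<And>n. qQ * (\<Sum>k\<le>n. of_nat (n choose k) * qQ ^ k * \<beta> k) - \<beta> n
                 = (if n = 0 then qQ - 1 else if n = 1 then 1 else 0)"
  shows "moments_of (\<lambda>n. Fract (poly_integral (qbc_poly \<beta> n)) 1 / zK) P_seq"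
proof -
  interpret big_qlegendre_weight qK zK
    by (rule big_qlegendre_weight_qK_zK)
  have "P_seq = (\<lambda>n. big_qlegendre qK S n \<circ>\<^sub>p [:1, qK - 1:])"
    by (simp add: P_seq_eq_big_qlegendre S_def fun_eq_iff)
  then show ?thesis
    using moments_of_big_qlegendre carlitz_moments_linear_power[OF beta_def] by simp
qed

end
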